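(* Suppose a language model produces a raw (pre-watermark) probability vector $p\in(0,1)^N$. Let $\gamma\in(0,1)$ with $\gamma N$ an integer, and randomly (uniformly) partition the indices $\{1,\dots,N\}$ into a green list $G$ of size $\gamma N$ and a red list $R$ of size $(1-\gamma)N$. Let $\delta>0$, $\alpha=\exp(\delta)$, and form the watermarked distribution by boosting the green list logits by $\delta$, i.e. $$\hat p_k=\frac{\alpha^{\mathbf{1}[k\in G]}\,p_k}{\sum_{i\in R}p_i+\alpha\sum_{i\in G}p_i}.$$ Sample a token index $k$ from the watermarked distribution. Then the probability (over the random partition and the sampling) that the token lies in the green list satisfies $$\mathbb{P}[k\in G]\ge \frac{\gamma\alpha}{1+(\alpha-1)\gamma}\,S\!\left(p,\frac{(1-\gamma)(\alpha-1)}{1+(\alpha-1)\gamma}\right).$$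
   Context: Spike entropy: for a discrete probability vector $p=(p_k)$ and a scalar $z$, the spike entropy of $p$ with modulus $z$ is $S(p,z)=\sum_k \frac{p_k}{1+z p_k}$. *)

theory Defs
  imports "HOL-Probability.Probability"
begin

text \<open>Tokens are indexed by {..<N} (i.e. 0..N-1 instead of 1..N).\<close>

definition spike_entropy :: "nat \<Rightarrow> (nat \<Rightarrow> real) \<Rightarrow> real \<Rightarrow> real" where
  "spike_entropy N p z = (\<Sum>k<N. p k / (1 + z * p k))"

definition wm_weight :: "nat \<Rightarrow> (nat \<Rightarrow> real) \<Rightarrow> real \<Rightarrow> nat set \<Rightarrow> nat \<Rightarrow> real" where
  "wm_weight N p \<alpha> G k =
     (if k < N then (if k \<in> G then \<alpha> else 1) * p k /
        ((\<Sum>i\<in>{..<N} - G. p i) + \<alpha> * (\<Sum>i\<in>G. p i))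
      else 0)"

definition watermark_pmf :: "nat \<Rightarrow> (nat \<Rightarrow> real) \<Rightarrow> real \<Rightarrow> nat set \<Rightarrow> nat pmf" where
  "watermark_pmf N p \<alpha> G = embed_pmf (wm_weight N p \<alpha> G)"

text \<open>All possible green lists of size m (the red list is the complement in {..<N}).\<close>
definition green_lists :: "nat \<Rightarrow> nat \<Rightarrow> nat set set" where
  "green_lists N m = {G. G \<subseteq> {..<N} \<and> card G = m}"

definition watermark_experiment :: "nat \<Rightarrow> nat \<Rightarrow> (nat \<Rightarrow> real) \<Rightarrow> real \<Rightarrow> (nat set \<times> nat) pmf" where
  "watermark_experiment N m p \<alpha> =
     pmf_of_set (green_lists N m) \<bind> (\<lambda>G. map_pmf (\<lambda>k. (G, k)) (watermark_pmf N p \<alpha> G))"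

end

theory Submission
  imports Defs
begin

text \<open>
  Write \<open>D(G) = 1 + (\<alpha> - 1) p(G)\<close> for the normaliser of the watermarked distribution, where
  \<open>p(G)\<close> is the raw mass of the green list. The probability of a green token is the average over
  green lists of \<open>\<Sum>k\<in>G. \<alpha> p\<^sub>k / D(G)\<close>; exchanging the sums gives
  \<open>\<Sum>k. \<alpha> p\<^sub>k \<cdot> E[1(k \<in> G) / D(G)]\<close>. Given \<open>k \<in> G\<close> (probability \<open>\<gamma>\<close>), any other token is green with
  probability \<open>(m - 1)/(N - 1) \<le> \<gamma>\<close>, so the conditional mean of \<open>D(G)\<close> is at most
  \<open>1 + (\<alpha> - 1)(p\<^sub>k + \<gamma>(1 - p\<^sub>k))\<close>. Convexity of \<open>1/x\<close> turns this into a lower bound for the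
  conditional mean of \<open>1/D(G)\<close>, and the resulting sum is the stated multiple of the spike entropy.
\<close>

lemma measure_bind_pmf_of_set:
  assumes "finite X" "X \<noteq> {}"
  shows "measure_pmf.prob (pmf_of_set X \<bind> f) E = (\<Sum>x\<in>X. measure_pmf.prob (f x) E) / card X"
proof -
  have "ennreal (measure_pmf.prob (pmf_of_set X \<bind> f) E) = (\<Sum>x\<in>X. ennreal (measure_pmf.prob (f x) E)) / card X"
    using assms by (simp add: measure_pmf.emeasure_eq_measure[symmetric] nn_integral_pmf_of_set)
  also have "\<dots> = ennreal ((\<Sum>x\<in>X. measure_pmf.prob (f x) E) / card X)"
    using assms by (simp add: ennreal_of_nat_eq_real_of_nat divide_ennreal card_gt_0_iff sum_nonneg)
  finally show ?thesis by (simp add: divide_nonneg_nonneg sum_nonneg)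
qed

lemma card_supersets:
  assumes "finite S" "T \<subseteq> S" "card T \<le> m"
  shows "card {G. G \<subseteq> S \<and> card G = m \<and> T \<subseteq> G} = (card S - card T) choose (m - card T)"
proof -
  have fT: "finite T" using assms finite_subset by blast
  have "bij_betw (\<lambda>G. G - T) {G. G \<subseteq> S \<and> card G = m \<and> T \<subseteq> G} {H. H \<subseteq> S - T \<and> card H = m - card T}"
  proof (rule bij_betw_byWitness[where f'="\<lambda>H. H \<union> T"])
    have "card (H \<union> T) = m" if "H \<subseteq> S - T" "card H = m - card T" for H
      using that assms fT by (subst card_Un_disjoint) (auto intro: finite_subset)
    then show "(\<lambda>H. H \<union> T) ` {H. H \<subseteq> S - T \<and> card H = m - card T} \<subseteq> {G. G \<subseteq> S \<and> card G = m \<and> T \<subseteq> G}"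
      using assms by auto
  qed (use fT in \<open>auto simp: card_Diff_subset\<close>)
  then have "card {G. G \<subseteq> S \<and> card G = m \<and> T \<subseteq> G} = card {H. H \<subseteq> S - T \<and> card H = m - card T}"
    by (rule bij_betw_same_card)
  also have "\<dots> = card (S - T) choose (m - card T)" using assms by (simp add: n_subsets)
  finally show ?thesis using fT assms by (simp add: card_Diff_subset)
qed

lemma card_supersets_insert:
  assumes "finite S" "T \<subseteq> S" "x \<in> S - T"
  shows "card {G. G \<subseteq> S \<and> card G = m \<and> insert x T \<subseteq> G} * (card S - card T)
           = (m - card T) * card {G. G \<subseteq> S \<and> card G = m \<and> T \<subseteq> G}"
proof -
  have "finite T" using assms finite_subset by blast
  then have card_xT: "card (insert x T) = Suc (card T)" using assms by simp
  show ?thesis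
  proof (cases "card T < m")
    case True
    have sub: "card {G. G \<subseteq> S \<and> card G = m \<and> insert x T \<subseteq> G}
        = (card S - card T - 1) choose (m - card T - 1)"
      using card_supersets[of S "insert x T" m] assms True card_xT by simp
    have sup: "card {G. G \<subseteq> S \<and> card G = m \<and> T \<subseteq> G} = (card S - card T) choose (m - card T)"
      using card_supersets[of S T m] assms True by simp
    have "(m - card T) * ((card S - card T) choose (m - card T))
        = (card S - card T) * ((card S - card T - 1) choose (m - card T - 1))"
      using True by (intro times_binomial_minus1_eq) simp
    then show ?thesis unfolding sub sup by (simp only: mult.commute)
  next
    case False
    have "\<not> (G \<subseteq> S \<and> card G = m \<and> insert x T \<subseteq> G)" for G
    proof
      assume G: "G \<subseteq> S \<and> card G = m \<and> insert x T \<subseteq> G"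
      then have "card (insert x T) \<le> card G" using assms by (meson card_mono finite_subset)
      then show False using G False card_xT by simp
    qed
    then have empty: "{G. G \<subseteq> S \<and> card G = m \<and> insert x T \<subseteq> G} = {}" by blast
    show ?thesis unfolding empty using False by simp
  qed
qed

lemma sum_members_swap:
  assumes "finite F" "finite I" "\<And>G. G \<in> F \<Longrightarrow> G \<subseteq> I"
  shows "(\<Sum>G\<in>F. \<Sum>i\<in>G. f G i) = (\<Sum>i\<in>I. \<Sum>G\<in>{G \<in> F. i \<in> G}. f G i)"
proof -
  have "(\<Sum>G\<in>F. \<Sum>i\<in>G. f G i) = (\<Sum>G\<in>F. \<Sum>i\<in>{i \<in> I. i \<in> G}. f G i)"
    using assms(3) by (intro sum.cong refl arg_cong[where f="sum _"]) auto
  also have "\<dots> = (\<Sum>i\<in>I. \<Sum>G\<in>{G \<in> F. i \<in> G}. f G i)"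
    using assms(1,2) by (rule sum.swap_restrict)
  finally show ?thesis .
qed

lemma card_div_le_sum_inverse:
  fixes f :: "'a \<Rightarrow> real" and B :: real
  assumes "finite A" "\<And>x. x \<in> A \<Longrightarrow> 0 < f x" "0 < B" "(\<Sum>x\<in>A. f x) \<le> card A * B"
  shows "card A / B \<le> (\<Sum>x\<in>A. 1 / f x)"
proof -
  have tangent: "2 / B - f x / B\<^sup>2 \<le> 1 / f x" if "x \<in> A" for x
  proof -
    have "0 < f x" using assms(2) that .
    then have "0 \<le> (f x - B)\<^sup>2 / (B\<^sup>2 * f x)"
      using \<open>0 < B\<close> by (intro divide_nonneg_pos) auto
    also have "\<dots> = 1 / f x - (2 / B - f x / B\<^sup>2)"
      using \<open>0 < f x\<close> \<open>0 < B\<close> by (simp add: field_simps power2_eq_square)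
    finally show ?thesis by simp
  qed
  have "card A / B = 2 * (card A / B) - card A * B / B\<^sup>2"
    using assms by (simp add: power2_eq_square)
  also have "\<dots> \<le> 2 * (card A / B) - (\<Sum>x\<in>A. f x) / B\<^sup>2"
    using assms by (simp add: divide_right_mono)
  also have "\<dots> = (\<Sum>x\<in>A. 2 / B - f x / B\<^sup>2)"
    by (simp add: sum_subtractf sum_divide_distrib)
  also have "\<dots> \<le> (\<Sum>x\<in>A. 1 / f x)"
    using tangent by (rule sum_mono)
  finally show ?thesis .
qed

lemma finite_green_lists: "finite (green_lists N m)"
  unfolding green_lists_def by (rule finite_subset[of _ "Pow {..<N}"]) auto

lemma card_green_lists: "card (green_lists N m) = N choose m"
  unfolding green_lists_def using n_subsets[of "{..<N}" m] by simp

lemma green_lists_nonempty: "m \<le> N \<Longrightarrow> green_lists N m \<noteq> {}"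
  using card_green_lists by (metis card.empty binomial_eq_0_iff not_less)

lemma card_green_lists_containing:
  assumes "k < N"
  shows "card {G \<in> green_lists N m. k \<in> G} * N = m * card (green_lists N m)"
proof -
  have "{G \<in> green_lists N m. k \<in> G} = {G. G \<subseteq> {..<N} \<and> card G = m \<and> {k} \<subseteq> G}"
    unfolding green_lists_def by auto
  then show ?thesis
    using card_supersets_insert[of "{..<N}" "{}" k m] assms by (simp add: green_lists_def)
qed

lemma card_green_lists_containing_pair_le:
  assumes "i < N" "k < N" "i \<noteq> k" "m \<le> N"
  shows "card {G \<in> green_lists N m. k \<in> G \<and> i \<in> G} * N \<le> m * card {G \<in> green_lists N m. k \<in> G}"
proof -
  define c where "c = card {G \<in> green_lists N m. k \<in> G}"
  define d where "d = card {G \<in> green_lists N m. k \<in> G \<and> i \<in> G}"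
  have "{G \<in> green_lists N m. k \<in> G \<and> i \<in> G} = {G. G \<subseteq> {..<N} \<and> card G = m \<and> {i, k} \<subseteq> G}"
    "{G \<in> green_lists N m. k \<in> G} = {G. G \<subseteq> {..<N} \<and> card G = m \<and> {k} \<subseteq> G}"
    unfolding green_lists_def by auto
  then have "d * (N - 1) = (m - 1) * c"
    unfolding c_def d_def using card_supersets_insert[of "{..<N}" "{k}" i m] assms by simp
  have "N * (m - 1) \<le> m * (N - 1)"
    using \<open>m \<le> N\<close> by (simp add: diff_mult_distrib2 mult.commute)
  then have "d * N * (N - 1) \<le> m * c * (N - 1)"
    using \<open>d * (N - 1) = (m - 1) * c\<close> by (metis mult.assoc mult.commute mult_le_mono1)
  then show ?thesis
    unfolding c_def d_def using assms by simp
qed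

lemma sum_mass_green_lists_containing_le:
  fixes p :: "nat \<Rightarrow> real"
  assumes p_nonneg: "\<And>i. i < N \<Longrightarrow> 0 \<le> p i" and p_sum: "(\<Sum>i<N. p i) = 1"
    and "k < N" "m \<le> N"
  shows "(\<Sum>G\<in>{G \<in> green_lists N m. k \<in> G}. sum p G)
           \<le> card {G \<in> green_lists N m. k \<in> G} * (p k + m / N * (1 - p k))"
proof -
  define A where "A = {G \<in> green_lists N m. k \<in> G}"
  define c where "c = real (card A)"
  have share: "card {G \<in> A. i \<in> G} \<le> m / N * c" if "i \<in> {..<N} - {k}" for i
  proof -
    have "{G \<in> A. i \<in> G} = {G \<in> green_lists N m. k \<in> G \<and> i \<in> G}"
      unfolding A_def by auto
    then have "card {G \<in> A. i \<in> G} * N \<le> m * card A"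
      unfolding A_def using card_green_lists_containing_pair_le[of i N k m] that assms by simp
    then have "real (card {G \<in> A. i \<in> G}) * N \<le> m * c"
      unfolding c_def by (metis of_nat_le_iff of_nat_mult)
    then show ?thesis
      unfolding c_def using \<open>k < N\<close> by (simp add: field_simps)
  qed
  have "(\<Sum>G\<in>A. sum p G) = (\<Sum>i<N. \<Sum>G\<in>{G \<in> A. i \<in> G}. p i)"
    unfolding A_def using finite_green_lists
    by (intro sum_members_swap) (auto simp: green_lists_def)
  also have "\<dots> = p k * c + (\<Sum>i\<in>{..<N} - {k}. p i * card {G \<in> A. i \<in> G})"
    using \<open>k < N\<close> unfolding c_def A_def by (simp add: sum.remove mult.commute)
  also have "\<dots> \<le> p k * c + (\<Sum>i\<in>{..<N} - {k}. p i * (m / N * c))"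
    using share p_nonneg by (intro add_left_mono sum_mono mult_left_mono) auto
  also have "\<dots> = p k * c + (\<Sum>i\<in>{..<N} - {k}. p i) * (m / N * c)"
    by (simp only: sum_distrib_right)
  also have "\<dots> = c * (p k + m / N * (1 - p k))"
    using \<open>k < N\<close> p_sum by (simp add: sum_diff1 algebra_simps)
  finally show ?thesis unfolding A_def c_def .
qed

lemma sum_inverse_denominators_green_lists_containing_ge:
  fixes p :: "nat \<Rightarrow> real"
  assumes p_nonneg: "\<And>i. i < N \<Longrightarrow> 0 \<le> p i" and p_sum: "(\<Sum>i<N. p i) = 1"
    and "1 \<le> \<alpha>" "k < N" "m \<le> N"
  shows "m / N / (1 + (\<alpha> - 1) * (p k + m / N * (1 - p k)))
           \<le> (\<Sum>G\<in>{G \<in> green_lists N m. k \<in> G}. 1 / (1 + (\<alpha> - 1) * sum p G)) / card (green_lists N m)"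
proof -
  define A where "A = {G \<in> green_lists N m. k \<in> G}"
  define B where "B = 1 + (\<alpha> - 1) * (p k + m / N * (1 - p k))"
  have "p k \<le> 1"
    using p_sum p_nonneg member_le_sum[of k "{..<N}" p] \<open>k < N\<close> by simp
  then have "0 \<le> p k + m / N * (1 - p k)"
    using p_nonneg \<open>k < N\<close> by simp
  then have "0 < B" unfolding B_def using \<open>1 \<le> \<alpha>\<close> by (simp add: add_pos_nonneg)
  have finA: "finite A" unfolding A_def using finite_green_lists by simp
  have mass_nonneg: "0 \<le> sum p G" if "G \<in> A" for G
    using that p_nonneg by (intro sum_nonneg) (auto simp: A_def green_lists_def)
  have denom_pos: "0 < 1 + (\<alpha> - 1) * sum p G" if "G \<in> A" for G
    using mass_nonneg[OF that] \<open>1 \<le> \<alpha>\<close> by (simp add: add_pos_nonneg)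
  have "(\<Sum>G\<in>A. 1 + (\<alpha> - 1) * sum p G) = card A + (\<alpha> - 1) * (\<Sum>G\<in>A. sum p G)"
    by (simp add: sum.distrib sum_distrib_left)
  also have "\<dots> \<le> card A + (\<alpha> - 1) * (card A * (p k + m / N * (1 - p k)))"
    using sum_mass_green_lists_containing_le[OF assms(1,2,4,5)] \<open>1 \<le> \<alpha>\<close>
    unfolding A_def by (intro add_left_mono mult_left_mono) simp_all
  also have "\<dots> = card A * B" unfolding B_def by (simp add: algebra_simps)
  finally have "(\<Sum>G\<in>A. 1 + (\<alpha> - 1) * sum p G) \<le> card A * B" .
  with finA denom_pos \<open>0 < B\<close> have bound: "card A / B \<le> (\<Sum>G\<in>A. 1 / (1 + (\<alpha> - 1) * sum p G))"
    by (rule card_div_le_sum_inverse)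
  have "real (card A) * N = m * card (green_lists N m)"
    using card_green_lists_containing[OF \<open>k < N\<close>, of m] unfolding A_def
    by (metis of_nat_mult)
  then have card_A: "real (card A) = m / N * card (green_lists N m)"
    using \<open>k < N\<close> by (simp add: field_simps)
  have "0 < real (card (green_lists N m))"
    using finite_green_lists green_lists_nonempty[OF \<open>m \<le> N\<close>] by (simp add: card_gt_0_iff)
  then have "m / N / B = card A / B / card (green_lists N m)"
    unfolding card_A by simp
  then show ?thesis
    unfolding A_def[symmetric] B_def[symmetric] using divide_right_mono[OF bound] by simp
qed

lemma watermark_denominator_pos:
  fixes \<alpha> P :: real
  assumes "0 < \<alpha>" "0 \<le> P" "P \<le> 1"
  shows "0 < 1 + (\<alpha> - 1) * P"
proof (cases "\<alpha> \<le> 1")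
  case True
  then have "(\<alpha> - 1) * 1 \<le> (\<alpha> - 1) * P" using assms by (intro mult_left_mono_neg) auto
  then show ?thesis using assms by simp
next
  case False
  then show ?thesis using assms by (simp add: add_pos_nonneg)
qed

lemma wm_weight_eq:
  fixes p :: "nat \<Rightarrow> real"
  assumes "G \<subseteq> {..<N}" "(\<Sum>i<N. p i) = 1"
  shows "wm_weight N p \<alpha> G k =
           (if k < N then (if k \<in> G then \<alpha> else 1) * p k / (1 + (\<alpha> - 1) * sum p G) else 0)"
proof -
  have "(\<Sum>i\<in>{..<N} - G. p i) = 1 - sum p G"
    using assms by (simp add: sum_diff)
  then show ?thesis unfolding wm_weight_def by (simp add: algebra_simps)
qed

lemma pmf_watermark_pmf:
  fixes p :: "nat \<Rightarrow> real"
  assumes G: "G \<subseteq> {..<N}" and p_nonneg: "\<And>i. i < N \<Longrightarrow> 0 \<le> p i"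
    and p_sum: "(\<Sum>i<N. p i) = 1" and "0 < \<alpha>"
  shows "pmf (watermark_pmf N p \<alpha> G) k = wm_weight N p \<alpha> G k"
proof -
  define D where "D = 1 + (\<alpha> - 1) * sum p G"
  have "sum p G \<le> 1"
    using G p_nonneg sum_mono2[of "{..<N}" G p] p_sum by auto
  then have "0 < D"
    unfolding D_def using G p_nonneg \<open>0 < \<alpha>\<close>
    by (intro watermark_denominator_pos sum_nonneg) auto
  have weight: "wm_weight N p \<alpha> G j = (if j < N then (if j \<in> G then \<alpha> else 1) * p j / D else 0)" for j
    unfolding D_def using wm_weight_eq[OF G p_sum] .
  have nonneg: "0 \<le> wm_weight N p \<alpha> G j" for j
    unfolding weight using \<open>0 < D\<close> \<open>0 < \<alpha>\<close> p_nonneg by simp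
  have "(\<Sum>j<N. (if j \<in> G then \<alpha> else 1) * p j)
      = (\<Sum>j\<in>{..<N} - G. (if j \<in> G then \<alpha> else 1) * p j) + (\<Sum>j\<in>G. (if j \<in> G then \<alpha> else 1) * p j)"
    using G by (intro sum.subset_diff) auto
  also have "\<dots> = (\<Sum>i\<in>{..<N} - G. p i) + \<alpha> * sum p G"
    by (simp add: sum_distrib_left)
  also have "\<dots> = D"
    unfolding D_def using G p_sum by (simp add: sum_diff algebra_simps)
  finally have total: "(\<Sum>j<N. wm_weight N p \<alpha> G j) = 1"
    unfolding weight using \<open>0 < D\<close> by (simp add: sum_divide_distrib[symmetric])
  have "(\<integral>\<^sup>+ j. ennreal (wm_weight N p \<alpha> G j) \<partial>count_space UNIV) = (\<Sum>j<N. ennreal (wm_weight N p \<alpha> G j))"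
    by (rule nn_integral_count_space') (auto simp: weight)
  also have "\<dots> = ennreal (\<Sum>j<N. wm_weight N p \<alpha> G j)"
    using nonneg by (intro sum_ennreal)
  finally have "(\<integral>\<^sup>+ j. ennreal (wm_weight N p \<alpha> G j) \<partial>count_space UNIV) = 1"
    using total by simp
  then show ?thesis
    unfolding watermark_pmf_def using nonneg by (subst pmf_embed_pmf) auto
qed

lemma measure_watermark_pmf_green:
  fixes p :: "nat \<Rightarrow> real"
  assumes G: "G \<subseteq> {..<N}" and p_nonneg: "\<And>i. i < N \<Longrightarrow> 0 \<le> p i"
    and p_sum: "(\<Sum>i<N. p i) = 1" and "0 < \<alpha>"
  shows "measure_pmf.prob (watermark_pmf N p \<alpha> G) G = (\<Sum>k\<in>G. \<alpha> * p k / (1 + (\<alpha> - 1) * sum p G))"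
proof -
  have "finite G" using G finite_subset by blast
  then have "measure_pmf.prob (watermark_pmf N p \<alpha> G) G = (\<Sum>k\<in>G. pmf (watermark_pmf N p \<alpha> G) k)"
    by (rule measure_measure_pmf_finite)
  also have "\<dots> = (\<Sum>k\<in>G. \<alpha> * p k / (1 + (\<alpha> - 1) * sum p G))"
    using G by (intro sum.cong refl)
      (auto simp: pmf_watermark_pmf[OF G p_nonneg p_sum \<open>0 < \<alpha>\<close>] wm_weight_eq[OF G p_sum])
  finally show ?thesis .
qed

lemma measure_watermark_experiment_green:
  fixes p :: "nat \<Rightarrow> real"
  assumes p_nonneg: "\<And>i. i < N \<Longrightarrow> 0 \<le> p i" and p_sum: "(\<Sum>i<N. p i) = 1"
    and "0 < \<alpha>" "m \<le> N"
  shows "measure_pmf.prob (watermark_experiment N m p \<alpha>) {(G, k). k \<in> G}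
           = (\<Sum>k<N. \<alpha> * p k *
               ((\<Sum>G\<in>{G \<in> green_lists N m. k \<in> G}. 1 / (1 + (\<alpha> - 1) * sum p G)) / card (green_lists N m)))"
proof -
  let ?D = "\<lambda>G. 1 + (\<alpha> - 1) * sum p G"
  have sub: "G \<subseteq> {..<N}" if "G \<in> green_lists N m" for G
    using that unfolding green_lists_def by simp
  have "measure_pmf.prob (watermark_experiment N m p \<alpha>) {(G, k). k \<in> G}
      = (\<Sum>G\<in>green_lists N m. measure_pmf.prob (watermark_pmf N p \<alpha> G) G) / card (green_lists N m)"
    unfolding watermark_experiment_def
    using finite_green_lists green_lists_nonempty[OF \<open>m \<le> N\<close>]
    by (simp add: measure_bind_pmf_of_set vimage_def)
  also have "\<dots> = (\<Sum>G\<in>green_lists N m. \<Sum>k\<in>G. \<alpha> * p k / ?D G) / card (green_lists N m)"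
    using sub by (simp add: measure_watermark_pmf_green[OF _ p_nonneg p_sum \<open>0 < \<alpha>\<close>])
  also have "\<dots> = (\<Sum>k<N. \<Sum>G\<in>{G \<in> green_lists N m. k \<in> G}. \<alpha> * p k / ?D G) / card (green_lists N m)"
    using finite_green_lists sub by (simp add: sum_members_swap)
  also have "\<dots> = (\<Sum>k<N. \<alpha> * p k * ((\<Sum>G\<in>{G \<in> green_lists N m. k \<in> G}. 1 / ?D G) / card (green_lists N m)))"
    by (simp add: sum_distrib_left sum_divide_distrib)
  finally show ?thesis .
qed

lemma spike_entropy_term_eq:
  fixes \<alpha> \<gamma> q :: real
  assumes "1 \<le> \<alpha>" "0 \<le> \<gamma>" "\<gamma> \<le> 1" "0 \<le> q"
  shows "\<gamma> * \<alpha> / (1 + (\<alpha> - 1) * \<gamma>) * (q / (1 + (1 - \<gamma>) * (\<alpha> - 1) / (1 + (\<alpha> - 1) * \<gamma>) * q))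
           = \<alpha> * q * (\<gamma> / (1 + (\<alpha> - 1) * (q + \<gamma> * (1 - q))))"
proof -
  define c where "c = 1 + (\<alpha> - 1) * \<gamma>"
  define d where "d = c + (1 - \<gamma>) * (\<alpha> - 1) * q"
  have "0 < c" unfolding c_def using assms by (simp add: add_pos_nonneg)
  moreover have "0 \<le> (1 - \<gamma>) * (\<alpha> - 1) * q" using assms by simp
  ultimately have "0 < d" unfolding d_def by simp
  have spike: "1 + (1 - \<gamma>) * (\<alpha> - 1) / c * q = d / c"
    unfolding d_def using \<open>0 < c\<close> by (simp add: field_simps)
  have boost: "1 + (\<alpha> - 1) * (q + \<gamma> * (1 - q)) = d"
    unfolding d_def c_def by (simp add: algebra_simps)
  show ?thesis
    unfolding c_def[symmetric] spike boost using \<open>0 < c\<close> \<open>0 < d\<close> by (simp add: field_simps)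
qed

theorem lemmaE1:
  fixes N m :: nat and p :: "nat \<Rightarrow> real" and \<gamma> \<delta> \<alpha> :: real
  assumes p_range: "\<And>k. k < N \<Longrightarrow> 0 < p k \<and> p k < 1"
    and p_sum: "(\<Sum>k<N. p k) = 1"
    and gamma: "0 < \<gamma>" "\<gamma> < 1"
    and m_def: "real m = \<gamma> * real N"
    and delta: "\<delta> > 0"
    and alpha: "\<alpha> = exp \<delta>"
  shows "measure_pmf.prob (watermark_experiment N m p \<alpha>) {(G, k). k \<in> G}
           \<ge> \<gamma> * \<alpha> / (1 + (\<alpha> - 1) * \<gamma>) *
             spike_entropy N p ((1 - \<gamma>) * (\<alpha> - 1) / (1 + (\<alpha> - 1) * \<gamma>))"
proof -
  have p_nonneg: "\<And>k. k < N \<Longrightarrow> 0 \<le> p k" using p_range less_imp_le by blast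
  have "0 < N" using p_sum by (cases N) auto
  have "1 < \<alpha>" using alpha delta by simp
  have \<gamma>_eq: "\<gamma> = m / N" using m_def \<open>0 < N\<close> by (simp add: field_simps)
  have "real m \<le> real N" unfolding m_def using gamma by (intro mult_left_le_one_le) auto
  then have "m \<le> N" by simp
  have mean_bound: "\<gamma> / (1 + (\<alpha> - 1) * (p k + \<gamma> * (1 - p k)))
      \<le> (\<Sum>G\<in>{G \<in> green_lists N m. k \<in> G}. 1 / (1 + (\<alpha> - 1) * sum p G)) / card (green_lists N m)"
    if "k < N" for k
    using sum_inverse_denominators_green_lists_containing_ge[OF p_nonneg p_sum
        less_imp_le[OF \<open>1 < \<alpha>\<close>] that \<open>m \<le> N\<close>]
    unfolding \<gamma>_eq .
  have "\<gamma> * \<alpha> / (1 + (\<alpha> - 1) * \<gamma>) * spike_entropy N p ((1 - \<gamma>) * (\<alpha> - 1) / (1 + (\<alpha> - 1) * \<gamma>))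
      = (\<Sum>k<N. \<alpha> * p k * (\<gamma> / (1 + (\<alpha> - 1) * (p k + \<gamma> * (1 - p k)))))"
    unfolding spike_entropy_def sum_distrib_left using p_nonneg gamma \<open>1 < \<alpha>\<close>
    by (intro sum.cong refl spike_entropy_term_eq) simp_all
  also have "\<dots> \<le> (\<Sum>k<N. \<alpha> * p k *
      ((\<Sum>G\<in>{G \<in> green_lists N m. k \<in> G}. 1 / (1 + (\<alpha> - 1) * sum p G)) / card (green_lists N m)))"
    using p_nonneg \<open>1 < \<alpha>\<close> by (intro sum_mono mult_left_mono mean_bound) auto
  also have "\<dots> = measure_pmf.prob (watermark_experiment N m p \<alpha>) {(G, k). k \<in> G}"
    using \<open>1 < \<alpha>\<close> by (intro measure_watermark_experiment_green[symmetric] p_nonneg p_sum \<open>m \<le> N\<close>) auto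
  finally show ?thesis .
qed

end
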